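(* Let $j_1,j_2,j_3$ be distinct complex numbers and use cyclic triples $(\alpha,\beta,\gamma)$ of $(1,2,3)$. Let $\mathcal E\subset\mathbb C^3(v_1,v_2,v_3)$ be the elliptic curve \[ v_1^2-v_2^2=j_1-j_2,\qquad v_1^2-v_3^2=j_1-j_3, \] and fix constants $c_\alpha$ with $c_\alpha^2=\dfrac{1}{(j_\alpha-j_\beta)(j_\alpha-j_\gamma)}$. Let $M=\mathbb C^6$ with coordinates $(S_1,S_2,S_3,T_1,T_2,T_3)$, and let \[ \hat{\mathcal S}=\Big\{(S,T,v)\in M\times\mathcal E:\ \sum_{\alpha=1}^3 c_\alpha\big(v_\beta v_\gamma T_\alpha+v_\alpha S_\alpha\big)=0\Big\}. \] Then $\hat{\mathcal S}$ is an $8$-fold covering of $M$ under the canonical projection $\pi:\hat{\mathcal S}\to M$, $(S,T,v)\mapsto(S,T)$; that is, to a (generic) point of $M$ there correspond eight points of $\hat{\mathcal S}$. *)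

theory Defs
  imports "HOL-Analysis.Analysis"
begin

text \<open>Points of M = C^6 are pairs (S,T) with S, T in C^3; indices range over
  the numeral type 3 = {0,1,2} (arithmetic mod 3), so that for an index a the
  cyclic triple is (a, a+1, a+2).\<close>

definition ell_curve :: "complex^3 \<Rightarrow> (complex^3) set" where
  "ell_curve j = {v. (v$0)\<^sup>2 - (v$1)\<^sup>2 = j$0 - j$1 \<and> (v$0)\<^sup>2 - (v$2)\<^sup>2 = j$0 - j$2}"

definition fibre :: "complex^3 \<Rightarrow> complex^3 \<Rightarrow> complex^3 \<Rightarrow> complex^3 \<Rightarrow> (complex^3) set" where
  "fibre j c S T = {v \<in> ell_curve j.
     (\<Sum>a\<in>UNIV. c$a * (v$(a+1) * v$(a+2) * T$a + v$a * S$a)) = 0}"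

inductive_set polyfun_M :: "(((complex^3) \<times> (complex^3)) \<Rightarrow> complex) set" where
  const: "(\<lambda>_. a) \<in> polyfun_M"
| coordS: "(\<lambda>p. fst p $ i) \<in> polyfun_M"
| coordT: "(\<lambda>p. snd p $ i) \<in> polyfun_M"
| add: "f \<in> polyfun_M \<Longrightarrow> g \<in> polyfun_M \<Longrightarrow> (\<lambda>p. f p + g p) \<in> polyfun_M"
| mult: "f \<in> polyfun_M \<Longrightarrow> g \<in> polyfun_M \<Longrightarrow> (\<lambda>p. f p * g p) \<in> polyfun_M"

end

theory Submission
  imports Defs "Subresultants.Subresultant_Gcd" "Berlekamp_Zassenhaus.Mahler_Measure"
begin

no_notation Matrix.vec_index (infixl "$" 100)
hide_const (open) up_ring.coeff module.smult

text \<open>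
  On the curve, the equation cutting out the fibre over \<open>(S, T)\<close> is linear in \<open>v\<^sub>2\<close>:
  \<open>v\<^sub>2 L(v\<^sub>0, v\<^sub>1) + Q(v\<^sub>0, v\<^sub>1) = 0\<close>. The conic \<open>v\<^sub>0\<^sup>2 - v\<^sub>1\<^sup>2 = j\<^sub>0 - j\<^sub>1\<close> is rational,
  parametrised by \<open>t = v\<^sub>0 - v\<^sub>1\<close>, and eliminating \<open>v\<^sub>2\<close> through \<open>v\<^sub>2\<^sup>2 = v\<^sub>0\<^sup>2 - (j\<^sub>0 - j\<^sub>2)\<close>
  identifies the fibre with the zero set of a polynomial \<open>H\<^sub>S\<^sub>,\<^sub>T(t) = Q\<^sup>2 - L\<^sup>2 W\<close> of degree
  at most 8, as long as \<open>H(0) \<noteq> 0\<close> and \<open>L\<close> does not vanish at the roots of \<open>H\<close>.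
  The product of the leading coefficient of \<open>H\<close>, of \<open>H(0)\<close>, of \<open>Res(H, H')\<close> and of
  \<open>Res(H, L)\<close> is a polynomial \<open>P\<close> in \<open>(S, T)\<close>, and where \<open>P\<close> does not vanish, \<open>H\<close> has
  exactly 8 simple roots. \<open>P\<close> is not identically zero: for \<open>S = e\<^sub>2\<close>, \<open>T = k e\<^sub>2\<close> the
  fibre is \<open>v\<^sub>2 = -k v\<^sub>0 v\<^sub>1\<close>, \<open>v\<^sub>0\<^sup>2\<close> a root of a quadratic, \<open>v\<^sub>1\<^sup>2 = v\<^sub>0\<^sup>2 - (j\<^sub>0 - j\<^sub>1)\<close>,
  which for generic \<open>k\<close> gives \<open>2 \<cdot> 2 \<cdot> 2\<close> points.
\<close>

lemma polyfun_M_sum: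
  "finite A \<Longrightarrow> (\<And>i. i \<in> A \<Longrightarrow> f i \<in> polyfun_M) \<Longrightarrow> (\<lambda>p. \<Sum>i\<in>A. f i p) \<in> polyfun_M"
proof (induction A rule: finite_induct)
  case empty
  then show ?case using polyfun_M.const[of 0] by simp
next
  case (insert x F)
  then show ?case using polyfun_M.add[of "f x" "\<lambda>p. \<Sum>i\<in>F. f i p"] by simp
qed

lemma polyfun_M_prod:
  "finite A \<Longrightarrow> (\<And>i. i \<in> A \<Longrightarrow> f i \<in> polyfun_M) \<Longrightarrow> (\<lambda>p. \<Prod>i\<in>A. f i p) \<in> polyfun_M"
proof (induction A rule: finite_induct)
  case empty
  then show ?case using polyfun_M.const[of 1] by simp
next
  case (insert x F)
  then show ?case using polyfun_M.mult[of "f x" "\<lambda>p. \<Prod>i\<in>F. f i p"] by simp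
qed

lemma polyfun_M_scale: "f \<in> polyfun_M \<Longrightarrow> (\<lambda>p. a * f p) \<in> polyfun_M"
  using polyfun_M.mult[OF polyfun_M.const[of a]] by simp

lemma polyfun_M_diff: "f \<in> polyfun_M \<Longrightarrow> g \<in> polyfun_M \<Longrightarrow> (\<lambda>p. f p - g p) \<in> polyfun_M"
  using polyfun_M.add[of f "\<lambda>p. (-1) * g p"] polyfun_M_scale[of g "-1"] by simp

lemma polyfun_M_det:
  assumes "\<And>p. A p \<in> carrier_mat n n"
    and "\<And>i k. i < n \<Longrightarrow> k < n \<Longrightarrow> (\<lambda>p. A p $$ (i, k)) \<in> polyfun_M"
  shows "(\<lambda>p. Determinant.det (A p)) \<in> polyfun_M"
proof -
  have expand: "Determinant.det (A p) =
      (\<Sum>\<pi> \<in> {\<pi>. \<pi> permutes {0..<n}}. signof \<pi> * (\<Prod>i = 0..<n. A p $$ (i, \<pi> i)))" for p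
    using assms(1)[of p] unfolding det_def by auto
  have entry: "(\<lambda>p. A p $$ (i, \<pi> i)) \<in> polyfun_M" if "\<pi> permutes {0..<n}" "i \<in> {0..<n}" for \<pi> i
    using assms(2) permutes_in_image[OF that(1)] that(2) by simp
  show ?thesis
    unfolding expand
    by (intro polyfun_M_sum polyfun_M_scale polyfun_M_prod) (auto simp: finite_permutations intro: entry)
qed

definition polyfun_coeffs :: "((complex^3) \<times> (complex^3) \<Rightarrow> complex poly) \<Rightarrow> bool" where
  "polyfun_coeffs f \<longleftrightarrow> (\<forall>n. (\<lambda>p. coeff (f p) n) \<in> polyfun_M)"

lemma polyfun_coeffs_const: "polyfun_coeffs (\<lambda>p. q)"
  unfolding polyfun_coeffs_def by (simp add: polyfun_M.const)

lemma polyfun_coeffs_smult: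
  "g \<in> polyfun_M \<Longrightarrow> polyfun_coeffs f \<Longrightarrow> polyfun_coeffs (\<lambda>p. smult (g p) (f p))"
  unfolding polyfun_coeffs_def by (simp add: polyfun_M.mult)

lemma polyfun_coeffs_add:
  "polyfun_coeffs f \<Longrightarrow> polyfun_coeffs g \<Longrightarrow> polyfun_coeffs (\<lambda>p. f p + g p)"
  unfolding polyfun_coeffs_def by (simp add: polyfun_M.add)

lemma polyfun_coeffs_diff:
  "polyfun_coeffs f \<Longrightarrow> polyfun_coeffs g \<Longrightarrow> polyfun_coeffs (\<lambda>p. f p - g p)"
  unfolding polyfun_coeffs_def by (simp add: polyfun_M_diff)

lemma polyfun_coeffs_mult:
  "polyfun_coeffs f \<Longrightarrow> polyfun_coeffs g \<Longrightarrow> polyfun_coeffs (\<lambda>p. f p * g p)"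
  unfolding polyfun_coeffs_def coeff_mult by (auto intro!: polyfun_M_sum polyfun_M.mult)

lemma polyfun_coeffs_pderiv: "polyfun_coeffs f \<Longrightarrow> polyfun_coeffs (\<lambda>p. pderiv (f p))"
  unfolding polyfun_coeffs_def coeff_pderiv by (auto intro!: polyfun_M_scale)

lemma polyfun_coeffs_pCons_0: "polyfun_coeffs f \<Longrightarrow> polyfun_coeffs (\<lambda>p. pCons 0 (f p))"
  unfolding polyfun_coeffs_def
proof (intro allI)
  fix n assume "\<forall>n. (\<lambda>p. coeff (f p) n) \<in> polyfun_M"
  then show "(\<lambda>p. coeff (pCons 0 (f p)) n) \<in> polyfun_M" by (cases n) (auto simp: polyfun_M.const)
qed

lemma polyfun_M_resultant_sub:
  assumes "polyfun_coeffs f" "polyfun_coeffs g"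
  shows "(\<lambda>p. resultant_sub m n (f p) (g p)) \<in> polyfun_M"
  unfolding resultant_sub_def
proof (rule polyfun_M_det)
  fix i k assume ik: "i < m + n" "k < m + n"
  show "(\<lambda>p. sylvester_mat_sub m n (f p) (g p) $$ (i, k)) \<in> polyfun_M"
    unfolding sylvester_mat_sub_index[OF ik]
    using assms unfolding polyfun_coeffs_def
    by (cases "i < n"; cases "i \<le> k \<and> k - i \<le> m"; cases "i - n \<le> k \<and> k \<le> i")
      (auto intro: polyfun_M.const)
qed (simp add: sylvester_mat_sub_def)

lemma resultant_eq_0_iff_common_root:
  fixes f g :: "complex poly"
  assumes "f \<noteq> 0"
  shows "resultant f g = 0 \<longleftrightarrow> (\<exists>r. poly f r = 0 \<and> poly g r = 0)"
proof -
  have "resultant f g = 0 \<longleftrightarrow> degree (gcd f g) \<noteq> 0" by (rule resultant_0_gcd)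
  also have "\<dots> \<longleftrightarrow> (\<exists>r. poly (gcd f g) r = 0)"
  proof
    assume "degree (gcd f g) \<noteq> 0"
    then show "\<exists>r. poly (gcd f g) r = 0"
      by (simp add: constant_degree fundamental_theorem_of_algebra)
  next
    assume "\<exists>r. poly (gcd f g) r = 0"
    then obtain r where "[:-r, 1:] dvd gcd f g" using poly_eq_0_iff_dvd by blast
    moreover have "gcd f g \<noteq> 0" using assms by simp
    ultimately have "degree [:-r, 1:] \<le> degree (gcd f g)" by (rule dvd_imp_degree_le)
    then show "degree (gcd f g) \<noteq> 0" by simp
  qed
  also have "\<dots> \<longleftrightarrow> (\<exists>r. poly f r = 0 \<and> poly g r = 0)" by (simp add: poly_eq_0_iff_dvd)
  finally show ?thesis .
qed

lemma rsquarefree_iff_resultant_pderiv: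
  fixes f :: "complex poly"
  assumes "f \<noteq> 0"
  shows "rsquarefree f \<longleftrightarrow> resultant f (pderiv f) \<noteq> 0"
  using assms by (simp add: rsquarefree_roots resultant_eq_0_iff_common_root)

lemma exhaust_3_0: "(i :: 3) = 0 \<or> i = 1 \<or> i = 2"
  using exhaust_3[of i] by auto

lemma UNIV_3_eq: "(UNIV :: 3 set) = {0, 1, 2}"
  using exhaust_3_0 by auto

lemma sum_UNIV_3: "(\<Sum>a \<in> (UNIV :: 3 set). f a) = f 0 + f 1 + (f 2 :: 'a :: comm_monoid_add)"
  unfolding UNIV_3_eq by (simp add: add.assoc)

lemma plus_3_simps:
  "(0::3) + 1 = 1" "(0::3) + 2 = 2" "(1::3) + 1 = 2" "(1::3) + 2 = 0" "(2::3) + 1 = 0" "(2::3) + 2 = 1"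
  by simp_all

lemma vec3_eq_iff: "(v :: 'a^3) = w \<longleftrightarrow> v$0 = w$0 \<and> v$1 = w$1 \<and> v$2 = w$2"
proof
  assume "v$0 = w$0 \<and> v$1 = w$1 \<and> v$2 = w$2"
  then have "v$i = w$i" for i using exhaust_3_0[of i] by auto
  then show "v = w" by (simp add: Finite_Cartesian_Product.vec_eq_iff)
qed simp

definition fibre_L :: "complex^3 \<Rightarrow> complex^3 \<Rightarrow> complex^3 \<Rightarrow> complex \<Rightarrow> complex \<Rightarrow> complex" where
  "fibre_L c S T x y = c$2 * S$2 + c$1 * T$1 * x + c$0 * T$0 * y"

definition fibre_Q :: "complex^3 \<Rightarrow> complex^3 \<Rightarrow> complex^3 \<Rightarrow> complex \<Rightarrow> complex \<Rightarrow> complex" where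
  "fibre_Q c S T x y = c$2 * T$2 * x * y + c$0 * S$0 * x + c$1 * S$1 * y"

lemma mem_fibre_iff:
  "v \<in> fibre j c S T \<longleftrightarrow>
     (v$0)\<^sup>2 - (v$1)\<^sup>2 = j$0 - j$1 \<and> (v$0)\<^sup>2 - (v$2)\<^sup>2 = j$0 - j$2 \<and>
     v$2 * fibre_L c S T (v$0) (v$1) + fibre_Q c S T (v$0) (v$1) = 0"
proof -
  have "(\<Sum>a\<in>UNIV. c$a * (v$(a+1) * v$(a+2) * T$a + v$a * S$a)) =
      c$0 * (v$1 * v$2 * T$0 + v$0 * S$0) + c$1 * (v$2 * v$0 * T$1 + v$1 * S$1)
      + c$2 * (v$0 * v$1 * T$2 + v$2 * S$2)"
    by (simp only: sum_UNIV_3 plus_3_simps)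
  also have "\<dots> = v$2 * fibre_L c S T (v$0) (v$1) + fibre_Q c S T (v$0) (v$1)"
    unfolding fibre_L_def fibre_Q_def by (simp add: algebra_simps)
  finally show ?thesis unfolding fibre_def ell_curve_def by simp
qed

section \<open>Rational parametrisation of the hyperbola\<close>

lemma hyperbola_param_of_point:
  fixes x y m :: "'a :: field_char_0"
  assumes "x\<^sup>2 - y\<^sup>2 = m"
  shows "2 * (x - y) * x = (x - y)\<^sup>2 + m" "2 * (x - y) * y = m - (x - y)\<^sup>2"
  unfolding assms[symmetric] by (simp_all add: power2_eq_square algebra_simps)

lemma hyperbola_point_of_param:
  fixes x y m t :: "'a :: field_char_0"
  assumes "t \<noteq> 0" and x: "2 * t * x = t\<^sup>2 + m" and y: "2 * t * y = m - t\<^sup>2"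
  shows "x - y = t" "x\<^sup>2 - y\<^sup>2 = m"
proof -
  have "2 * t * (x - y) = 2 * t * t" using x y by (simp add: power2_eq_square algebra_simps)
  then show xy: "x - y = t" using assms(1) by simp
  have "(2 * t) * (2 * t) * (x\<^sup>2 - y\<^sup>2) = (2 * t * x)\<^sup>2 - (2 * t * y)\<^sup>2"
    by (simp add: power2_eq_square algebra_simps)
  also have "\<dots> = (2 * t) * (2 * t) * m" unfolding x y by (simp add: power2_eq_square algebra_simps)
  finally show "x\<^sup>2 - y\<^sup>2 = m" using assms(1) by simp
qed

lemma hyperbola_eq_of_diff_eq:
  fixes x y x' y' m :: "'a :: field_char_0"
  assumes "m \<noteq> 0" and "x\<^sup>2 - y\<^sup>2 = m" and "x'\<^sup>2 - y'\<^sup>2 = m" and diff: "x - y = x' - y'"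
  shows "x = x'" "y = y'"
proof -
  have "(x - y) * (x + y) = m" using assms(2) by (simp add: power2_eq_square algebra_simps)
  moreover have "(x' - y') * (x' + y') = m" using assms(3) by (simp add: power2_eq_square algebra_simps)
  ultimately have "x - y \<noteq> 0" "(x - y) * (x + y) = (x - y) * (x' + y')" using assms(1) diff by auto
  then have sum: "x + y = x' + y'" by simp
  have "2 * x = (x + y) + (x - y)" by (simp add: algebra_simps mult_2)
  also have "\<dots> = (x' + y') + (x' - y')" unfolding sum diff ..
  also have "\<dots> = 2 * x'" by (simp add: algebra_simps mult_2)
  finally have "x = x'" by simp
  then show "x = x'" "y = y'" using diff by simp_all
qed

section \<open>The eliminant\<close>

text \<open>
  With \<open>x = (t\<^sup>2 + m)/(2t)\<close>, \<open>y = (m - t\<^sup>2)/(2t)\<close> and \<open>m = j\<^sub>0 - j\<^sub>1\<close>, the polynomials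
  \<open>L_poly\<close>, \<open>Q_poly\<close> and \<open>W_poly\<close> are \<open>2t fibre_L(x, y)\<close>, \<open>4t\<^sup>2 fibre_Q(x, y)\<close> and
  \<open>4t\<^sup>2 (x\<^sup>2 - (j\<^sub>0 - j\<^sub>2))\<close>.
\<close>

definition L_poly :: "complex^3 \<Rightarrow> complex^3 \<Rightarrow> complex^3 \<Rightarrow> complex^3 \<Rightarrow> complex poly" where
  "L_poly j c S T =
     smult (c$2 * S$2) [:0, 2:] + smult (c$1 * T$1) [:j$0 - j$1, 0, 1:]
     + smult (c$0 * T$0) [:j$0 - j$1, 0, -1:]"

definition Q_poly :: "complex^3 \<Rightarrow> complex^3 \<Rightarrow> complex^3 \<Rightarrow> complex^3 \<Rightarrow> complex poly" where
  "Q_poly j c S T =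
     smult (c$2 * T$2) ([:j$0 - j$1, 0, 1:] * [:j$0 - j$1, 0, -1:])
     + smult (c$0 * S$0) ([:j$0 - j$1, 0, 1:] * [:0, 2:])
     + smult (c$1 * S$1) ([:j$0 - j$1, 0, -1:] * [:0, 2:])"

definition W_poly :: "complex^3 \<Rightarrow> complex poly" where
  "W_poly j = [:j$0 - j$1, 0, 1:]\<^sup>2 - smult (4 * (j$0 - j$2)) [:0, 0, 1:]"

definition eliminant :: "complex^3 \<Rightarrow> complex^3 \<Rightarrow> complex^3 \<Rightarrow> complex^3 \<Rightarrow> complex poly" where
  "eliminant j c S T = (Q_poly j c S T)\<^sup>2 - (L_poly j c S T)\<^sup>2 * W_poly j"

lemma poly_L_Q_eliminant:
  assumes x: "2 * t * x = t\<^sup>2 + (j$0 - j$1)" and y: "2 * t * y = (j$0 - j$1) - t\<^sup>2"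
  shows "poly (L_poly j c S T) t = 2 * t * fibre_L c S T x y"
    and "poly (eliminant j c S T) t =
      16 * t^4 * ((fibre_Q c S T x y)\<^sup>2 - (fibre_L c S T x y)\<^sup>2 * (x\<^sup>2 - (j$0 - j$2)))"
proof -
  have a: "poly [:j$0 - j$1, 0, 1:] t = 2 * t * x" and b: "poly [:j$0 - j$1, 0, -1:] t = 2 * t * y"
    using x y by (simp_all add: power2_eq_square algebra_simps)
  show L: "poly (L_poly j c S T) t = 2 * t * fibre_L c S T x y"
    unfolding L_poly_def fibre_L_def poly_add poly_smult a b by (simp add: algebra_simps)
  have Q: "poly (Q_poly j c S T) t = 4 * t\<^sup>2 * fibre_Q c S T x y"
    unfolding Q_poly_def fibre_Q_def poly_add poly_smult poly_mult a b
    by (simp add: power2_eq_square algebra_simps)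
  have W: "poly (W_poly j) t = 4 * t\<^sup>2 * (x\<^sup>2 - (j$0 - j$2))"
    unfolding W_poly_def poly_diff poly_power poly_smult a by (simp add: power2_eq_square algebra_simps)
  show "poly (eliminant j c S T) t =
      16 * t^4 * ((fibre_Q c S T x y)\<^sup>2 - (fibre_L c S T x y)\<^sup>2 * (x\<^sup>2 - (j$0 - j$2)))"
    unfolding eliminant_def poly_diff poly_mult poly_power L Q W
    by (simp add: power2_eq_square power4_eq_xxxx algebra_simps)
qed

lemma degree_L_poly: "degree (L_poly j c S T) \<le> 2"
  unfolding L_poly_def by (intro degree_add_le order.trans[OF degree_smult_le]) auto

lemma degree_eliminant: "degree (eliminant j c S T) \<le> 8"
proof -
  have mult: "degree (p * q) \<le> a + b" if "degree p \<le> a" "degree q \<le> b" for p q :: "complex poly" and a b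
    using that degree_mult_le[of p q] by linarith
  have Q: "degree (Q_poly j c S T) \<le> 4"
    unfolding Q_poly_def
    by (intro degree_add_le order.trans[OF degree_smult_le] mult[where a = 2 and b = 2, simplified]
        mult[where a = 2 and b = 2, simplified]) auto
  have W: "degree (W_poly j) \<le> 4"
    unfolding W_poly_def power2_eq_square
    by (intro degree_diff_le order.trans[OF degree_smult_le] mult[where a = 2 and b = 2, simplified]) auto
  show ?thesis
    unfolding eliminant_def power2_eq_square
    using mult[OF mult[OF degree_L_poly degree_L_poly] W] mult[OF Q Q] by (intro degree_diff_le) auto
qed

lemma eliminant_root_of_fibre:
  assumes v: "v \<in> fibre j c S T"
  shows "poly (eliminant j c S T) (v$0 - v$1) = 0"
proof -
  note v' = v[unfolded mem_fibre_iff]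
  have x: "2 * (v$0 - v$1) * v$0 = (v$0 - v$1)\<^sup>2 + (j$0 - j$1)"
    and y: "2 * (v$0 - v$1) * v$1 = (j$0 - j$1) - (v$0 - v$1)\<^sup>2"
    using hyperbola_param_of_point[OF conjunct1[OF v']] by simp_all
  have "fibre_Q c S T (v$0) (v$1) = - v$2 * fibre_L c S T (v$0) (v$1)"
    using v' by (simp add: eq_neg_iff_add_eq_0 add.commute)
  moreover have "(v$0)\<^sup>2 - (j$0 - j$2) = (v$2)\<^sup>2" using v' by (simp add: algebra_simps)
  ultimately show ?thesis
    unfolding poly_L_Q_eliminant(2)[OF x y] by (simp add: power2_eq_square algebra_simps)
qed

lemma fibre_point_of_eliminant_root:
  assumes root: "poly (eliminant j c S T) t = 0" and "poly (eliminant j c S T) 0 \<noteq> 0"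
    and L: "poly (L_poly j c S T) t \<noteq> 0"
  shows "\<exists>v \<in> fibre j c S T. v$0 - v$1 = t"
proof -
  let ?m = "j$0 - j$1"
  have t: "t \<noteq> 0" using assms by auto
  define x y where "x = (t\<^sup>2 + ?m) / (2 * t)" and "y = (?m - t\<^sup>2) / (2 * t)"
  have x: "2 * t * x = t\<^sup>2 + ?m" and y: "2 * t * y = ?m - t\<^sup>2" using t unfolding x_def y_def by auto
  note eval = poly_L_Q_eliminant[OF x y]
  have L0: "fibre_L c S T x y \<noteq> 0" using L unfolding eval by simp
  have Q2: "(fibre_Q c S T x y)\<^sup>2 = (fibre_L c S T x y)\<^sup>2 * (x\<^sup>2 - (j$0 - j$2))"
    using root t unfolding eval by simp
  define z where "z = - fibre_Q c S T x y / fibre_L c S T x y"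
  define v :: "complex^3" where "v = (\<chi> i. if i = 0 then x else if i = 1 then y else z)"
  have "x\<^sup>2 - z\<^sup>2 = j$0 - j$2"
    using Q2 L0 unfolding z_def by (simp add: power_divide field_simps)
  moreover have "z * fibre_L c S T x y + fibre_Q c S T x y = 0" using L0 unfolding z_def by simp
  ultimately have "v \<in> fibre j c S T"
    using hyperbola_point_of_param[OF t x y] unfolding mem_fibre_iff v_def by simp
  moreover have "v$0 - v$1 = t" using hyperbola_point_of_param[OF t x y] unfolding v_def by simp
  ultimately show ?thesis by blast
qed

lemma inj_on_fibre_diff:
  assumes "j$0 \<noteq> j$1"
    and L: "\<And>t. poly (eliminant j c S T) t = 0 \<Longrightarrow> poly (L_poly j c S T) t \<noteq> 0"
  shows "inj_on (\<lambda>v. v$0 - v$1) (fibre j c S T)"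
proof (rule inj_onI)
  fix v w assume v: "v \<in> fibre j c S T" and w: "w \<in> fibre j c S T" and eq: "v$0 - v$1 = w$0 - w$1"
  let ?t = "v$0 - v$1" and ?m = "j$0 - j$1"
  note v' = v[unfolded mem_fibre_iff] and w' = w[unfolded mem_fibre_iff]
  have m: "?m \<noteq> 0" using assms(1) by simp
  have 0: "v$0 = w$0" and 1: "v$1 = w$1"
    using hyperbola_eq_of_diff_eq[OF m conjunct1[OF v'] conjunct1[OF w'] eq] by simp_all
  have xv: "2 * ?t * v$0 = ?t\<^sup>2 + ?m" and yv: "2 * ?t * v$1 = ?m - ?t\<^sup>2"
    using hyperbola_param_of_point[OF conjunct1[OF v']] by simp_all
  have "fibre_L c S T (v$0) (v$1) \<noteq> 0"
    using L[OF eliminant_root_of_fibre[OF v]] unfolding poly_L_Q_eliminant(1)[OF xv yv] by simp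
  then have "v$2 = w$2" using v' w' unfolding 0 1 by (metis add_right_cancel mult_right_cancel)
  then show "v = w" using 0 1 vec3_eq_iff by blast
qed

lemma bij_betw_fibre_eliminant_roots:
  assumes "j$0 \<noteq> j$1" and "poly (eliminant j c S T) 0 \<noteq> 0"
    and "\<And>t. poly (eliminant j c S T) t = 0 \<Longrightarrow> poly (L_poly j c S T) t \<noteq> 0"
  shows "bij_betw (\<lambda>v. v$0 - v$1) (fibre j c S T) {t. poly (eliminant j c S T) t = 0}"
proof (rule bij_betw_imageI)
  show "inj_on (\<lambda>v. v$0 - v$1) (fibre j c S T)" by (rule inj_on_fibre_diff[OF assms(1,3)])
  show "(\<lambda>v. v$0 - v$1) ` fibre j c S T = {t. poly (eliminant j c S T) t = 0}"
  proof (intro equalityI subsetI)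
    fix t assume "t \<in> (\<lambda>v. v$0 - v$1) ` fibre j c S T"
    then show "t \<in> {t. poly (eliminant j c S T) t = 0}"
      using eliminant_root_of_fibre by auto
  next
    fix t assume "t \<in> {t. poly (eliminant j c S T) t = 0}"
    then obtain v where "v \<in> fibre j c S T" "v$0 - v$1 = t"
      using fibre_point_of_eliminant_root[of j c S T t] assms(2,3) by auto
    then show "t \<in> (\<lambda>v. v$0 - v$1) ` fibre j c S T" by blast
  qed
qed

section \<open>The genericity condition\<close>

text \<open>
  When \<open>degree H = 8\<close>, adding \<open>t H\<close> to \<open>L\<close> gives a polynomial of degree exactly 9 with the
  same values at the roots of \<open>H\<close>; so the Sylvester determinant of fixed size \<open>8 + 9\<close>
  below is the resultant \<open>Res(H, L + t H)\<close>, and the one of size \<open>8 + 7\<close> is \<open>Res(H, H')\<close>.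
\<close>

definition L_poly_lift :: "complex^3 \<Rightarrow> complex^3 \<Rightarrow> complex^3 \<Rightarrow> complex^3 \<Rightarrow> complex poly" where
  "L_poly_lift j c S T = L_poly j c S T + pCons 0 (eliminant j c S T)"

definition genericity_poly :: "complex^3 \<Rightarrow> complex^3 \<Rightarrow> (complex^3) \<times> (complex^3) \<Rightarrow> complex" where
  "genericity_poly j c p =
     (let H = eliminant j c (fst p) (snd p)
      in coeff H 8 * coeff H 0 * resultant_sub 8 7 H (pderiv H)
         * resultant_sub 8 9 H (L_poly_lift j c (fst p) (snd p)))"

lemma polyfun_genericity_poly: "genericity_poly j c \<in> polyfun_M"
proof -
  have coord: "(\<lambda>p. a * fst p $ i) \<in> polyfun_M" "(\<lambda>p. a * snd p $ i) \<in> polyfun_M" for a i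
    by (intro polyfun_M_scale polyfun_M.coordS polyfun_M.coordT)+
  have L: "polyfun_coeffs (\<lambda>p. L_poly j c (fst p) (snd p))"
    unfolding L_poly_def by (intro polyfun_coeffs_add polyfun_coeffs_smult polyfun_coeffs_const coord)
  have Q: "polyfun_coeffs (\<lambda>p. Q_poly j c (fst p) (snd p))"
    unfolding Q_poly_def by (intro polyfun_coeffs_add polyfun_coeffs_smult polyfun_coeffs_const coord)
  have H: "polyfun_coeffs (\<lambda>p. eliminant j c (fst p) (snd p))"
    unfolding eliminant_def power2_eq_square
    by (intro polyfun_coeffs_diff polyfun_coeffs_mult polyfun_coeffs_const L Q)
  have "polyfun_coeffs (\<lambda>p. L_poly_lift j c (fst p) (snd p))"
    unfolding L_poly_lift_def by (intro polyfun_coeffs_add polyfun_coeffs_pCons_0 L H)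
  then have "(\<lambda>p. genericity_poly j c p) \<in> polyfun_M"
    unfolding genericity_poly_def Let_def
    using H polyfun_coeffs_pderiv[OF H]
    by (intro polyfun_M.mult polyfun_M_resultant_sub) (auto simp: polyfun_coeffs_def)
  then show ?thesis by simp
qed

lemma genericity_poly_neq_0_iff:
  fixes j c S T :: "complex^3"
  defines "H \<equiv> eliminant j c S T"
  shows "genericity_poly j c (S, T) \<noteq> 0 \<longleftrightarrow>
    degree H = 8 \<and> poly H 0 \<noteq> 0 \<and> rsquarefree H \<and>
    (\<forall>t. poly H t = 0 \<longrightarrow> poly (L_poly j c S T) t \<noteq> 0)"
proof (cases "degree H = 8")
  case False
  then have "coeff H 8 = 0" using degree_eliminant[of j c S T] le_degree unfolding H_def by fastforce
  then show ?thesis using False unfolding genericity_poly_def H_def by simp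
next
  case True
  then have H0: "H \<noteq> 0" by auto
  have "degree (L_poly j c S T) < degree (pCons 0 H)" using degree_L_poly[of j c S T] True H0 by simp
  then have "degree (L_poly_lift j c S T) = 9"
    using True H0 unfolding L_poly_lift_def H_def[symmetric] by (simp add: degree_add_eq_right)
  then have "resultant_sub 8 9 H (L_poly_lift j c S T) = resultant H (L_poly_lift j c S T)"
    and "resultant_sub 8 7 H (pderiv H) = resultant H (pderiv H)"
    using True by (simp_all add: resultant_sub degree_pderiv)
  moreover have "coeff H 8 \<noteq> 0" using True H0 by (metis leading_coeff_0_iff)
  moreover have "poly (L_poly_lift j c S T) t = poly (L_poly j c S T) t + t * poly H t" for t
    unfolding L_poly_lift_def H_def by simp
  ultimately show ?thesis
    using True H0 unfolding genericity_poly_def H_def[symmetric] Let_def fst_conv snd_conv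
    by (auto simp: poly_0_coeff_0 rsquarefree_iff_resultant_pderiv resultant_eq_0_iff_common_root)
qed

lemma card_fibre_if_generic:
  assumes "j$0 \<noteq> j$1" and "genericity_poly j c (S, T) \<noteq> 0"
  shows "card (fibre j c S T) = 8"
proof -
  let ?H = "eliminant j c S T"
  have H: "degree ?H = 8" "poly ?H 0 \<noteq> 0" "rsquarefree ?H"
    "\<And>t. poly ?H t = 0 \<Longrightarrow> poly (L_poly j c S T) t \<noteq> 0"
    using assms(2) unfolding genericity_poly_neq_0_iff by blast+
  then have "?H \<noteq> 0" by auto
  have "card (fibre j c S T) = card {t. poly ?H t = 0}"
    by (rule bij_betw_same_card[OF bij_betw_fibre_eliminant_roots[OF assms(1) H(2,4)]])
  also have "\<dots> = 8" using rsquarefree_card_degree[OF \<open>?H \<noteq> 0\<close>] H(1,3) by simp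
  finally show ?thesis .
qed

section \<open>A generic point\<close>

lemma exists_nonzero_nonroot:
  fixes q :: "'a :: {idom, ring_char_0} poly"
  assumes "q \<noteq> 0"
  obtains x where "x \<noteq> 0" "poly q x \<noteq> 0"
proof -
  have "finite (insert 0 {x. poly q x = 0})" using poly_roots_finite[OF assms] by simp
  then obtain x where "x \<notin> insert 0 {x. poly q x = 0}"
    using ex_new_if_finite[OF infinite_UNIV_char_0] by blast
  then show ?thesis using that by auto
qed

lemma card_square_roots:
  fixes x :: complex
  assumes "x \<noteq> 0"
  shows "card {a. a\<^sup>2 = x} = 2" and "finite {a. a\<^sup>2 = x}"
proof -
  show "card {a. a\<^sup>2 = x} = 2" using card_nth_roots[OF assms, of 2] by simp
  then show "finite {a. a\<^sup>2 = x}" by (intro card_ge_0_finite) simp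
qed

lemma quadratic_distinct_roots:
  fixes a b c :: complex
  assumes "a \<noteq> 0" and "b\<^sup>2 - 4 * a * c \<noteq> 0"
  obtains x1 x2 where "x1 \<noteq> x2" "a * x1\<^sup>2 + b * x1 + c = 0" "a * x2\<^sup>2 + b * x2 + c = 0"
proof -
  define s where "s = csqrt (b\<^sup>2 - 4 * a * c)"
  have s: "s\<^sup>2 = b\<^sup>2 - 4 * a * c" "s \<noteq> 0" using assms(2) unfolding s_def by auto
  have root: "a * x\<^sup>2 + b * x + c = 0" if "x = (- b + s) / (2 * a) \<or> x = (- b - s) / (2 * a)" for x
  proof -
    have "4 * a * (a * x\<^sup>2 + b * x + c) = (2 * a * x + b)\<^sup>2 - s\<^sup>2"
      unfolding s by (simp add: power2_eq_square algebra_simps)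
    also have "(2 * a * x + b)\<^sup>2 = s\<^sup>2" using that assms(1) by (auto simp: power2_eq_square)
    finally show ?thesis using assms(1) by simp
  qed
  have "(- b + s) / (2 * a) \<noteq> (- b - s) / (2 * a)" using s(2) assms(1) by (simp add: divide_cancel_right)
  with root show ?thesis using that by blast
qed

lemma card_UN_square_root_pairs:
  fixes X :: "complex set"
  assumes "finite X" and "\<And>x. x \<in> X \<Longrightarrow> x \<noteq> 0 \<and> x \<noteq> m"
  shows "card (\<Union>x \<in> X. {a. a\<^sup>2 = x} \<times> {b. b\<^sup>2 = x - m}) = 4 * card X"
proof -
  have "card (\<Union>x \<in> X. {a. a\<^sup>2 = x} \<times> {b. b\<^sup>2 = x - m}) =
      (\<Sum>x \<in> X. card ({a. a\<^sup>2 = x} \<times> {b. b\<^sup>2 = x - m}))"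
    using assms by (intro card_UN_disjoint) (auto simp: card_square_roots)
  also have "\<dots> = (\<Sum>x \<in> X. 4)"
    using assms(2) by (intro sum.cong) (auto simp: card_cartesian_product card_square_roots)
  finally show ?thesis by simp
qed

lemma mem_fibre_axis:
  fixes j c :: "complex^3"
  assumes x: "k\<^sup>2 * x\<^sup>2 + (- (k\<^sup>2 * (j$0 - j$1) + 1)) * x + (j$0 - j$2) = 0"
    and a: "a\<^sup>2 = x" and b: "b\<^sup>2 = x - (j$0 - j$1)"
  shows "(\<chi> i. if i = 0 then a else if i = 1 then b else - k * a * b) \<in> fibre j c (axis 2 1) (axis 2 k)"
proof -
  have "a\<^sup>2 - (k * a * b)\<^sup>2 = x - k\<^sup>2 * x * (x - (j$0 - j$1))" using a b by (simp add: power_mult_distrib)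
  also have "\<dots> = j$0 - j$2" using x by (simp add: power2_eq_square algebra_simps)
  finally show ?thesis
    using a b unfolding mem_fibre_iff fibre_L_def fibre_Q_def by (simp add: axis_def)
qed

lemma card_fibre_axis_ge_8:
  fixes j c :: "complex^3"
  assumes j: "j$0 \<noteq> j$1" "j$0 \<noteq> j$2" "j$1 \<noteq> j$2"
    and k: "k \<noteq> 0" "(k\<^sup>2 * (j$0 - j$1) + 1)\<^sup>2 - 4 * k\<^sup>2 * (j$0 - j$2) \<noteq> 0"
    and fin: "finite (fibre j c (axis 2 1) (axis 2 k))"
  shows "8 \<le> card (fibre j c (axis 2 1) (axis 2 k))"
proof -
  define m n where "m = j$0 - j$1" and "n = j$0 - j$2"
  have "k\<^sup>2 \<noteq> 0" using k(1) by simp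
  moreover have "(- (k\<^sup>2 * m + 1))\<^sup>2 - 4 * k\<^sup>2 * n \<noteq> 0" unfolding power2_minus m_def n_def by (rule k(2))
  ultimately obtain x1 x2 where x12: "x1 \<noteq> x2"
    and "k\<^sup>2 * x1\<^sup>2 + (- (k\<^sup>2 * m + 1)) * x1 + n = 0" "k\<^sup>2 * x2\<^sup>2 + (- (k\<^sup>2 * m + 1)) * x2 + n = 0"
    by (rule quadratic_distinct_roots)
  then have roots: "k\<^sup>2 * x\<^sup>2 + (- (k\<^sup>2 * m + 1)) * x + n = 0" if "x \<in> {x1, x2}" for x
    using that by blast
  have "x \<noteq> 0 \<and> x \<noteq> m" if "x \<in> {x1, x2}" for x
  proof -
    have "x = 0 \<Longrightarrow> n = 0" "x = m \<Longrightarrow> n - m = 0"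
      using roots[OF that] by (auto simp: power2_eq_square algebra_simps)
    then show ?thesis using j unfolding m_def n_def by auto
  qed
  then have card_8: "card (\<Union>x \<in> {x1, x2}. {a. a\<^sup>2 = x} \<times> {b. b\<^sup>2 = x - m}) = 8"
    using card_UN_square_root_pairs[of "{x1, x2}" m] x12 by simp
  define g :: "complex \<times> complex \<Rightarrow> complex^3"
    where "g = (\<lambda>(a, b). \<chi> i. if i = 0 then a else if i = 1 then b else - k * a * b)"
  have "inj g"
  proof (rule injI)
    fix p q assume "g p = g q"
    then have "g p $ 0 = g q $ 0" "g p $ 1 = g q $ 1" by simp_all
    then show "p = q" by (cases p, cases q) (simp add: g_def)
  qed
  have sub: "g ` (\<Union>x \<in> {x1, x2}. {a. a\<^sup>2 = x} \<times> {b. b\<^sup>2 = x - m}) \<subseteq> fibre j c (axis 2 1) (axis 2 k)"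
    using mem_fibre_axis roots unfolding g_def m_def n_def by fastforce
  show ?thesis
    using card_mono[OF fin sub] card_image[OF inj_on_subset[OF \<open>inj g\<close> subset_UNIV]] card_8 by simp
qed

lemma genericity_poly_neq_0_if_card_fibre_ge_8:
  fixes j c S T :: "complex^3"
  defines "H \<equiv> eliminant j c S T"
  assumes "j$0 \<noteq> j$1" and H0: "poly H 0 \<noteq> 0"
    and HL: "\<And>t. poly H t = 0 \<Longrightarrow> poly (L_poly j c S T) t \<noteq> 0"
    and "8 \<le> card (fibre j c S T)"
  shows "genericity_poly j c (S, T) \<noteq> 0"
proof -
  have "H \<noteq> 0" using H0 by auto
  have "8 \<le> card {t. poly H t = 0}"
    using assms(5) bij_betw_same_card[OF bij_betw_fibre_eliminant_roots[OF assms(2) H0[unfolded H_def]]] HL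
    unfolding H_def by simp
  moreover have "card {t. poly H t = 0} \<le> degree H" using card_poly_roots_bound[OF \<open>H \<noteq> 0\<close>] .
  moreover have "degree H \<le> 8" unfolding H_def by (rule degree_eliminant)
  ultimately have "card {t. poly H t = 0} = degree H" "degree H = 8" by linarith+
  then show ?thesis
    unfolding genericity_poly_neq_0_iff H_def[symmetric] using rsquarefree_card_degree[OF \<open>H \<noteq> 0\<close>] H0 HL
    by blast
qed

lemma genericity_poly_not_identically_zero:
  fixes j c :: "complex^3"
  assumes j: "j$0 \<noteq> j$1" "j$0 \<noteq> j$2" "j$1 \<noteq> j$2" and "c$2 \<noteq> 0"
  shows "\<exists>p. genericity_poly j c p \<noteq> 0"
proof -
  let ?m = "j$0 - j$1" and ?n = "j$0 - j$2"
  obtain k where "k \<noteq> 0" and disc: "poly [:1, 0, 2 * ?m - 4 * ?n, 0, ?m\<^sup>2:] k \<noteq> 0"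
    using exists_nonzero_nonroot[of "[:1, 0, 2 * ?m - 4 * ?n, 0, ?m\<^sup>2:]"] by auto
  have "(k\<^sup>2 * ?m + 1)\<^sup>2 - 4 * k\<^sup>2 * ?n = poly [:1, 0, 2 * ?m - 4 * ?n, 0, ?m\<^sup>2:] k"
    by (simp add: power2_eq_square algebra_simps)
  with \<open>k \<noteq> 0\<close> disc have k: "k \<noteq> 0" "(k\<^sup>2 * ?m + 1)\<^sup>2 - 4 * k\<^sup>2 * ?n \<noteq> 0" by simp_all
  define S T :: "complex^3" where "S = axis 2 1" and "T = axis 2 k"
  let ?H = "eliminant j c S T"
  have "poly ?H 0 = (c$2 * k * ?m * ?m)\<^sup>2"
    unfolding eliminant_def Q_poly_def L_poly_def S_def T_def by (simp add: axis_def power2_eq_square)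
  then have H0: "poly ?H 0 \<noteq> 0" using assms k by simp
  have "poly (L_poly j c S T) t = 2 * c$2 * t" for t
    unfolding L_poly_def S_def T_def by (simp add: axis_def)
  then have HL: "poly (L_poly j c S T) t \<noteq> 0" if "poly ?H t = 0" for t
    using that H0 \<open>c$2 \<noteq> 0\<close> by auto
  have "?H \<noteq> 0" using H0 by auto
  then have "finite (fibre j c S T)"
    using bij_betw_finite[OF bij_betw_fibre_eliminant_roots[OF j(1) H0]] HL poly_roots_finite by blast
  then have "8 \<le> card (fibre j c S T)" using card_fibre_axis_ge_8[OF j k] unfolding S_def T_def by simp
  then show ?thesis using genericity_poly_neq_0_if_card_fibre_ge_8[OF j(1) H0 HL] by blast
qed

theorem corollary5:
  fixes j c :: "complex^3"
  assumes distinct: "inj (\<lambda>a. j$a)"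
    and c_sq: "\<And>a. (c$a)\<^sup>2 = 1 / ((j$a - j$(a+1)) * (j$a - j$(a+2)))"
  shows "\<exists>P \<in> polyfun_M. (\<exists>p. P p \<noteq> 0) \<and>
           (\<forall>S T. P (S, T) \<noteq> 0 \<longrightarrow> card (fibre j c S T) = 8)"
proof -
  have j: "j$0 \<noteq> j$1" "j$0 \<noteq> j$2" "j$1 \<noteq> j$2"
    using inj_eq[OF distinct, of 0 1] inj_eq[OF distinct, of 0 2] inj_eq[OF distinct, of 1 2] by simp_all
  have "(c$2)\<^sup>2 \<noteq> 0" using c_sq[of 2, unfolded plus_3_simps] j by simp
  then have "c$2 \<noteq> 0" by simp
  show ?thesis
    using polyfun_genericity_poly genericity_poly_not_identically_zero[OF j \<open>c$2 \<noteq> 0\<close>]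
      card_fibre_if_generic[OF j(1)] by blast
qed

end
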